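(* Let $N\ge2$, $\Omega=\mathbb{R}^{N-1}\times(0,\infty)$, $\psi\in L^p(\partial\Omega)$ with $p\in[1,\infty)$, and $T>0$. For $\delta>0$, $k\ge0$ let $v_{\delta,k}(x,t):=\int_{\partial\Omega}\Phi_{\delta,k}(x,y,t)\psi(y)\,d\sigma(y)$ and $w_\delta(x,t):=\int_{\partial\Omega}P(x'-y',x_N+t/\delta)\psi(y)\,d\sigma(y)$. Then \[\sup_{(x,t)\in\Omega\times(T,\infty)}|v_{\delta,k}(x,t)|=O(\delta^{\frac{N-1}p})\ \text{as }\delta\to0^+\text{ for each fixed }k>0,\qquad \sup_{(x,t)\in\Omega\times(T,\infty)}|w_\delta(x,t)|=O(\delta^{\frac{N-1}p})\ \text{as }\delta\to0^+,\] and, for each fixed $\delta>0$, $\sup_{(x,t)\in\Omega\times(T,\infty)}|v_{\delta,k}(x,t)|=O(k^{-\frac{N-1}{2p}})$ as $k\to\infty$.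
   Context: $x=(x',x_N)$, $\partial\Omega\cong\mathbb{R}^{N-1}$ with surface measure $d\sigma$. $\Gamma_d(x,t)=(4\pi t)^{-d/2}e^{-|x|^2/(4t)}$, $\partial_\xi\Gamma_1$ is the spatial derivative of $\Gamma_1$. $\Phi_{\delta,k}(x,y,t):=-2\int_0^\infty\Gamma_{N-1}(x'-y',\frac k\delta t+\tau)\partial_\xi\Gamma_1(x_N+y_N+\frac t\delta,\tau)d\tau$ (the fundamental solution of the Laplace equation in $\Omega$ with boundary condition $\delta\partial_tu-k\Delta'u-\partial_{x_N}u=0$). $P(x)=c_Nx_N|x|^{-N}$, $c_N=\pi^{-N/2}\Gamma(N/2)$. *)

theory Defs
  imports "HOL-Analysis.Analysis"
begin

text \<open>Points of \<Omega> = R^(N-1) x (0,inf) are pairs (x', x_N) with x' :: real^'n and x_N > 0,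
  where N - 1 = CARD('n).  The boundary \<partial>\<Omega> is identified with real^'n, with surface
  measure the Lebesgue measure lborel on real^'n.\<close>

definition heat_kernel :: "real^'n \<Rightarrow> real \<Rightarrow> real" where
  "heat_kernel x t = (4 * pi * t) powr (- real CARD('n) / 2) * exp (- (norm x)\<^sup>2 / (4 * t))"

definition heat_kernel1 :: "real \<Rightarrow> real \<Rightarrow> real" where
  "heat_kernel1 \<xi> t = (4 * pi * t) powr (- 1 / 2) * exp (- \<xi>\<^sup>2 / (4 * t))"

definition dheat_kernel1 :: "real \<Rightarrow> real \<Rightarrow> real" where
  "dheat_kernel1 \<xi> t = deriv (\<lambda>s. heat_kernel1 s t) \<xi>"

definition Phi :: "real \<Rightarrow> real \<Rightarrow> real^'n \<Rightarrow> real \<Rightarrow> real^'n \<Rightarrow> real \<Rightarrow> real \<Rightarrow> real" where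
  "Phi \<delta> k x' xN y' yN t =
     - 2 * (LINT \<tau>:{0<..}|lborel.
              heat_kernel (x' - y') (k / \<delta> * t + \<tau>) * dheat_kernel1 (xN + yN + t / \<delta>) \<tau>)"

definition cN :: "'n::finite itself \<Rightarrow> real" where
  "cN _ = pi powr (- (real CARD('n) + 1) / 2) * Gamma ((real CARD('n) + 1) / 2)"

definition poisson :: "real^'n \<Rightarrow> real \<Rightarrow> real" where
  "poisson z' zN = cN TYPE('n) * zN / (sqrt ((norm z')\<^sup>2 + zN\<^sup>2)) ^ (CARD('n) + 1)"

definition v_fun :: "real \<Rightarrow> real \<Rightarrow> (real^'n \<Rightarrow> real) \<Rightarrow> real^'n \<Rightarrow> real \<Rightarrow> real \<Rightarrow> real" where
  "v_fun \<delta> k \<psi> x' xN t = (\<integral>y'. Phi \<delta> k x' xN y' 0 t * \<psi> y' \<partial>lborel)"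

definition w_fun :: "real \<Rightarrow> (real^'n \<Rightarrow> real) \<Rightarrow> real^'n \<Rightarrow> real \<Rightarrow> real \<Rightarrow> real" where
  "w_fun \<delta> \<psi> x' xN t = (\<integral>y'. poisson (x' - y') (xN + t / \<delta>) * \<psi> y' \<partial>lborel)"

end

theory Submission
  imports Defs "HOL-Probability.Probability"
begin

text \<open>For y_N = 0 the kernel \<Phi>_{\<delta>,k}(x, y, t) is dominated in absolute value by
  K(x' - y') = 2 \<integral>_0^\<infinity> \<Gamma>_{N-1}(x' - y', \<sigma> + \<tau>) |\<partial>_\<xi>\<Gamma>_1(a, \<tau>)| d\<tau>, where
  a = x_N + t/\<delta> \<ge> T/\<delta> and \<sigma> = k t/\<delta> \<ge> k T/\<delta>.  Since \<Gamma>_{N-1} has unit mass,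
  \<parallel>K\<parallel>_1 = 2 \<integral>_0^\<infinity> |\<partial>_\<xi>\<Gamma>_1(a, \<tau>)| d\<tau>, which the parabolic scaling \<tau> = a^2 v shows to be
  independent of a.  Bounding \<Gamma>_{N-1}(\<cdot>, \<sigma> + \<tau>) by (4\<pi>\<tau>)^{-(N-1)/2} and scaling again gives
  \<parallel>K\<parallel>_\<infinity> \<le> C a^{-(N-1)}; bounding it by (4\<pi>\<sigma>)^{-(N-1)/2} gives \<parallel>K\<parallel>_\<infinity> \<le> C \<sigma>^{-(N-1)/2}.
  Likewise the Poisson kernel P(\<cdot>, s), s = x_N + t/\<delta>, has bounded L^1 norm and
  \<parallel>P(\<cdot>, s)\<parallel>_\<infinity> \<le> c_N s^{-(N-1)}.  Finally, any kernel with \<parallel>K\<parallel>_1 \<le> m and \<parallel>K\<parallel>_\<infinity> \<le> S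
  satisfies |\<integral> K \<psi>| \<le> (m + \<parallel>\<psi>\<parallel>_p^p) S^{1/p}, as one sees by splitting according to whether
  |\<psi>| \<le> S^{1/p}.\<close>

lemma abs_integral_le_nn_integral:
  fixes f :: "'a \<Rightarrow> real"
  shows "ennreal \<bar>\<integral>x. f x \<partial>M\<bar> \<le> (\<integral>\<^sup>+x. ennreal \<bar>f x\<bar> \<partial>M)"
proof (cases "integrable M f")
  case True
  then show ?thesis
    using integral_norm_bound_ennreal[OF True] by simp
qed (simp add: not_integrable_integral_eq)

lemma mult_le_powr_split:
  fixes \<kappa> x l p :: real
  assumes "0 \<le> \<kappa>" "\<kappa> \<le> l powr p" "0 \<le> l" "0 \<le> x" "1 \<le> p"
  shows "\<kappa> * x \<le> l * \<kappa> + l * x powr p"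
proof (cases "x \<le> l")
  case True
  then have "\<kappa> * x \<le> l * \<kappa>"
    using assms by (simp add: mult_left_mono mult.commute)
  then show ?thesis
    using assms by (simp add: add_increasing2)
next
  case False
  have "\<kappa> * x \<le> l powr p * x"
    using assms by (intro mult_right_mono) auto
  also have "\<dots> = l * (l powr (p - 1) * x)"
    using assms by (simp add: powr_mult_base)
  also have "\<dots> \<le> l * (x powr (p - 1) * x)"
    using assms False by (intro mult_left_mono mult_right_mono powr_mono2) auto
  also have "x powr (p - 1) * x = x powr p"
    using assms False by (simp add: powr_mult_base mult.commute)
  finally show ?thesis
    using assms by (simp add: add_increasing)
qed

lemma abs_integral_le_kernel_Lp:
  fixes f \<psi> :: "'a \<Rightarrow> real" and K :: "'a \<Rightarrow> ennreal"
  assumes p: "1 \<le> p"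
    and \<psi>: "\<psi> \<in> borel_measurable M" "integrable M (\<lambda>y. \<bar>\<psi> y\<bar> powr p)"
    and K: "K \<in> borel_measurable M"
    and f: "\<And>y. ennreal \<bar>f y\<bar> \<le> K y * ennreal \<bar>\<psi> y\<bar>"
    and mass: "(\<integral>\<^sup>+y. K y \<partial>M) \<le> ennreal m" "0 \<le> m"
    and sup: "\<And>y. K y \<le> ennreal S" "0 \<le> S"
  shows "\<bar>\<integral>y. f y \<partial>M\<bar> \<le> (m + (\<integral>y. \<bar>\<psi> y\<bar> powr p \<partial>M)) * S powr (1 / p)"
proof -
  define l where "l = S powr (1 / p)"
  define A where "A = (\<integral>y. \<bar>\<psi> y\<bar> powr p \<partial>M)"
  have l: "0 \<le> l" "l powr p = S"
    using p sup(2) by (simp_all add: l_def powr_powr)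
  have A: "0 \<le> A" "(\<integral>\<^sup>+y. ennreal (\<bar>\<psi> y\<bar> powr p) \<partial>M) = ennreal A"
    unfolding A_def using \<psi>(2) by (simp_all add: nn_integral_eq_integral)
  have pointwise: "K y * ennreal \<bar>\<psi> y\<bar> \<le> ennreal l * K y + ennreal l * ennreal (\<bar>\<psi> y\<bar> powr p)" for y
  proof -
    obtain \<kappa> where \<kappa>: "0 \<le> \<kappa>" "K y = ennreal \<kappa>"
      using sup(1)[of y] by (cases "K y") (auto simp: top_unique)
    then have "\<kappa> \<le> l powr p"
      using sup(1)[of y] sup(2) l(2) by simp
    then have "\<kappa> * \<bar>\<psi> y\<bar> \<le> l * \<kappa> + l * \<bar>\<psi> y\<bar> powr p"
      using \<kappa> l p by (intro mult_le_powr_split) auto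
    then show ?thesis
      using \<kappa> l by (simp add: ennreal_mult'[symmetric] ennreal_plus[symmetric] del: ennreal_plus)
  qed
  have "ennreal \<bar>\<integral>y. f y \<partial>M\<bar> \<le> (\<integral>\<^sup>+y. ennreal \<bar>f y\<bar> \<partial>M)"
    by (rule abs_integral_le_nn_integral)
  also have "\<dots> \<le> (\<integral>\<^sup>+y. ennreal l * K y + ennreal l * ennreal (\<bar>\<psi> y\<bar> powr p) \<partial>M)"
    by (intro nn_integral_mono order.trans[OF f pointwise])
  also have "\<dots> = ennreal l * (\<integral>\<^sup>+y. K y \<partial>M) + ennreal l * ennreal A"
    using K \<psi>(1) by (simp add: nn_integral_add nn_integral_cmult A(2))
  also have "\<dots> \<le> ennreal l * ennreal m + ennreal l * ennreal A"
    by (intro add_right_mono mult_left_mono mass(1)) simp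
  also have "\<dots> = ennreal ((m + A) * l)"
    using l A mass(2) by (simp add: algebra_simps flip: ennreal_mult' ennreal_plus)
  finally show ?thesis
    using l A mass(2) unfolding l_def A_def by (simp add: ennreal_le_iff)
qed

lemma powr_neg_le_of_divide_le:
  fixes a T \<delta> e :: real
  assumes "0 < T" "0 < \<delta>" "T / \<delta> \<le> a" "0 \<le> e"
  shows "a powr (- e) \<le> T powr (- e) * \<delta> powr e"
proof -
  have "a powr (- e) \<le> (T / \<delta>) powr (- e)"
    using assms by (intro powr_mono2') auto
  also have "\<dots> = T powr (- e) * \<delta> powr e"
    using assms by (simp add: powr_divide powr_minus divide_simps)
  finally show ?thesis .
qed

lemma powr_mult_exp_neg_inverse_bounded:
  fixes q :: real
  assumes q: "q > 0"
  obtains B where "\<And>v. 0 < v \<Longrightarrow> v \<le> 1 \<Longrightarrow> v powr (-q) * exp (- 1 / (4 * v)) \<le> B"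
proof
  define m where "m = nat \<lceil>q\<rceil>"
  have m: "m > 0" "q \<le> real m"
    using q by (auto simp: m_def)
  fix v :: real
  assume v: "0 < v" "v \<le> 1"
  have "v powr (-q) = (1 / v) powr q"
    using v by (simp add: powr_minus_divide powr_divide)
  also have "\<dots> \<le> (1 / v) powr real m"
    using v m by (intro powr_mono) auto
  also have "\<dots> = (1 / v) ^ m"
    using v by (simp add: powr_realpow)
  finally have power_bound: "v powr (-q) \<le> (1 / v) ^ m" .
  have "(1 / (4 * v * real m)) ^ m \<le> (1 + (1 / (4 * v)) / real m) ^ m"
    using v m by (intro power_mono) (auto simp: field_simps)
  also have "\<dots> \<le> exp (1 / (4 * v))"
  proof (rule exp_ge_one_plus_x_over_n_power_n)
    show "- real m \<le> 1 / (4 * v)"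
      using v by (smt (verit) divide_nonneg_nonneg of_nat_0_le_iff)
  qed (use m in simp)
  finally have "exp (- 1 / (4 * v)) \<le> 1 / (1 / (4 * v * real m)) ^ m"
    using v m by (simp add: exp_minus inverse_eq_divide divide_left_mono)
  then have exp_bound: "exp (- 1 / (4 * v)) \<le> (4 * v * real m) ^ m"
    by (simp add: power_one_over)
  have "v powr (-q) * exp (- 1 / (4 * v)) \<le> (1 / v) ^ m * (4 * v * real m) ^ m"
    using power_bound exp_bound v by (intro mult_mono) auto
  also have "\<dots> = (1 / v * (4 * v * real m)) ^ m"
    by (rule power_mult_distrib[symmetric])
  also have "1 / v * (4 * v * real m) = 4 * real m"
    using v by simp
  finally show "v powr (-q) * exp (- 1 / (4 * v)) \<le> (4 * real m) ^ m" .
qed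

lemma nn_integral_powr_atLeast:
  fixes c q :: real
  assumes c: "c > 0" and q: "q > 1"
  shows "(\<integral>\<^sup>+v\<in>{c..}. ennreal (v powr (-q)) \<partial>lborel) = ennreal (c powr (1 - q) / (q - 1))"
proof -
  have "((\<lambda>v. v powr (-q)) has_integral c powr (1 - q) / (q - 1)) {c..}"
    using has_integral_powr_to_inf[of "-q" c] c q by (simp add: minus_divide_right)
  then show ?thesis
    by (rule nn_integral_has_integral_lebesgue'[rotated]) simp
qed

lemma nn_integral_powr_abs_le:
  fixes c s r :: real
  assumes s: "s > 0" and r: "r > 1"
  shows "(\<integral>\<^sup>+u. ennreal ((\<bar>c - u\<bar> + s) powr (-r)) \<partial>lborel) \<le> ennreal (2 * (s powr (1 - r) / (r - 1)))"
proof -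
  let ?h = "\<lambda>u. ennreal (indicator {0..} u * (u + s) powr (-r))"
  have half: "(\<integral>\<^sup>+u. ?h u \<partial>lborel) = ennreal (s powr (1 - r) / (r - 1))"
  proof -
    have "(\<integral>\<^sup>+v\<in>{s..}. ennreal (v powr (-r)) \<partial>lborel)
        = ennreal \<bar>1\<bar> * (\<integral>\<^sup>+u. ennreal ((s + 1 * u) powr (-r)) * indicator {s..} (s + 1 * u) \<partial>lborel)"
      by (rule nn_integral_real_affine) auto
    also have "\<dots> = (\<integral>\<^sup>+u. ?h u \<partial>lborel)"
      by (auto intro!: nn_integral_cong simp: indicator_def add.commute)
    finally show ?thesis
      using nn_integral_powr_atLeast[OF s r] by simp
  qed
  have "(\<integral>\<^sup>+u. ennreal ((\<bar>c - u\<bar> + s) powr (-r)) \<partial>lborel)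
      = ennreal \<bar>-1\<bar> * (\<integral>\<^sup>+u. ennreal ((\<bar>c - (c + (-1) * u)\<bar> + s) powr (-r)) \<partial>lborel)"
    by (rule nn_integral_real_affine) auto
  also have "\<dots> \<le> (\<integral>\<^sup>+u. ?h u + ?h (0 + (-1) * u) \<partial>lborel)"
    by (auto intro!: nn_integral_mono simp: indicator_def add_increasing add_increasing2)
  also have "\<dots> = (\<integral>\<^sup>+u. ?h u \<partial>lborel) + (\<integral>\<^sup>+u. ?h (0 + (-1) * u) \<partial>lborel)"
    by (rule nn_integral_add) auto
  also have "(\<integral>\<^sup>+u. ?h (0 + (-1) * u) \<partial>lborel) = (\<integral>\<^sup>+u. ?h u \<partial>lborel)"
    using nn_integral_real_affine[of ?h "-1" 0] by simp
  finally show ?thesis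
    using s r by (simp add: half ennreal_plus[symmetric] del: ennreal_plus)
qed

section \<open>The heat kernel and the heat flux\<close>

lemma norm_power2_eq_sum_Basis:
  fixes z :: "'a::euclidean_space"
  shows "(norm z)\<^sup>2 = (\<Sum>b\<in>Basis. (z \<bullet> b)\<^sup>2)"
  unfolding power2_norm_eq_inner euclidean_inner[of z z] by (simp add: power2_eq_square)

lemma heat_kernel_eq_prod_normal_density:
  fixes x' y' :: "real^'n"
  assumes s: "s > 0"
  shows "heat_kernel (x' - y') s = (\<Prod>b\<in>Basis. normal_density (x' \<bullet> b) (sqrt (2 * s)) (y' \<bullet> b))"
proof -
  have factor: "normal_density (x' \<bullet> b) (sqrt (2 * s)) (y' \<bullet> b)
      = (4 * pi * s) powr (-1/2) * exp (- ((x' - y') \<bullet> b)\<^sup>2 / (4 * s))" for b :: "real^'n"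
  proof -
    have "1 / sqrt (2 * pi * (sqrt (2 * s))\<^sup>2) = (4 * pi * s) powr (-1/2)"
      using s by (simp add: powr_minus_divide powr_half_sqrt)
    moreover have "(y' \<bullet> b - x' \<bullet> b)\<^sup>2 / (2 * (sqrt (2 * s))\<^sup>2) = ((x' - y') \<bullet> b)\<^sup>2 / (4 * s)"
      using s by (simp add: inner_diff_left power2_commute)
    ultimately show ?thesis
      unfolding normal_density_def by simp
  qed
  have "(\<Prod>b\<in>Basis. normal_density (x' \<bullet> b) (sqrt (2 * s)) (y' \<bullet> b))
      = ((4 * pi * s) powr (-1/2)) ^ CARD('n) * exp (\<Sum>b\<in>Basis. - ((x' - y') \<bullet> b)\<^sup>2 / (4 * s))"
    by (simp add: factor prod.distrib exp_sum)
  also have "\<dots> = heat_kernel (x' - y') s"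
    unfolding heat_kernel_def norm_power2_eq_sum_Basis[of "x' - y'"]
    using s by (simp add: powr_realpow[symmetric] powr_powr sum_negf sum_divide_distrib)
  finally show ?thesis ..
qed

lemma nn_integral_heat_kernel:
  fixes x' :: "real^'n"
  assumes s: "s > 0"
  shows "(\<integral>\<^sup>+y'. ennreal (heat_kernel (x' - y') s) \<partial>lborel) = 1"
proof -
  have "(\<integral>\<^sup>+y'. ennreal (heat_kernel (x' - y') s) \<partial>lborel)
      = (\<integral>\<^sup>+y'. (\<Prod>b\<in>Basis. ennreal (normal_density (x' \<bullet> b) (sqrt (2 * s)) (y' \<bullet> b))) \<partial>lborel)"
    using s by (simp add: heat_kernel_eq_prod_normal_density prod_ennreal)
  also have "\<dots> = (\<Prod>b\<in>(Basis::(real^'n) set).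
      (\<integral>\<^sup>+u. ennreal (normal_density (x' \<bullet> b) (sqrt (2 * s)) u) \<partial>lborel))"
    by (rule nn_integral_lborel_prod) auto
  also have "\<dots> = 1"
    using s by (subst nn_integral_eq_integral) (auto intro!: prod.neutral)
  finally show ?thesis .
qed

lemma heat_kernel_nonneg: "0 \<le> heat_kernel z s"
  unfolding heat_kernel_def by simp

lemma heat_kernel_le: "s > 0 \<Longrightarrow> heat_kernel (z::real^'n) s \<le> (4 * pi * s) powr (- real CARD('n) / 2)"
  unfolding heat_kernel_def by (intro mult_left_le) auto

lemma heat_kernel_shift_le:
  fixes z :: "real^'n"
  assumes "\<sigma> \<ge> 0" "\<tau> > 0"
  shows "heat_kernel z (\<sigma> + \<tau>) \<le> (4 * pi) powr (- real CARD('n) / 2) * \<tau> powr (- (real CARD('n) / 2))"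
proof -
  have "heat_kernel z (\<sigma> + \<tau>) \<le> (4 * pi * (\<sigma> + \<tau>)) powr (- real CARD('n) / 2)"
    using assms by (intro heat_kernel_le) simp
  also have "\<dots> \<le> (4 * pi * \<tau>) powr (- real CARD('n) / 2)"
    using assms by (intro powr_mono2') auto
  also have "\<dots> = (4 * pi) powr (- real CARD('n) / 2) * \<tau> powr (- (real CARD('n) / 2))"
    by (simp add: powr_mult)
  finally show ?thesis .
qed

lemma dheat_kernel1_eq:
  assumes "\<tau> > 0"
  shows "dheat_kernel1 \<xi> \<tau> = - \<xi> / (2 * \<tau>) * heat_kernel1 \<xi> \<tau>"
proof -
  have "((\<lambda>s. heat_kernel1 s \<tau>) has_real_derivative
      (4 * pi * \<tau>) powr (- 1 / 2) * (exp (- \<xi>\<^sup>2 / (4 * \<tau>)) * (- (2 * \<xi>) / (4 * \<tau>)))) (at \<xi>)"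
    unfolding heat_kernel1_def using assms
    by (auto intro!: derivative_eq_intros simp: power2_eq_square field_simps)
  then have "dheat_kernel1 \<xi> \<tau> = (4 * pi * \<tau>) powr (- 1 / 2) * (exp (- \<xi>\<^sup>2 / (4 * \<tau>)) * (- (2 * \<xi>) / (4 * \<tau>)))"
    unfolding dheat_kernel1_def by (rule DERIV_imp_deriv)
  also have "\<dots> = - \<xi> / (2 * \<tau>) * heat_kernel1 \<xi> \<tau>"
    unfolding heat_kernel1_def using assms by (simp add: field_simps)
  finally show ?thesis .
qed

definition heat_flux :: "real \<Rightarrow> real \<Rightarrow> real" where
  "heat_flux a \<tau> = a / (2 * \<tau>) * heat_kernel1 a \<tau>"

lemma heat_flux_nonneg: "0 \<le> a \<Longrightarrow> 0 < \<tau> \<Longrightarrow> 0 \<le> heat_flux a \<tau>"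
  unfolding heat_flux_def heat_kernel1_def by simp

lemma abs_dheat_kernel1: "0 \<le> a \<Longrightarrow> 0 < \<tau> \<Longrightarrow> \<bar>dheat_kernel1 a \<tau>\<bar> = heat_flux a \<tau>"
  by (simp add: dheat_kernel1_eq heat_flux_def heat_kernel1_def abs_mult)

lemma heat_flux_eq:
  assumes "\<tau> > 0"
  shows "heat_flux a \<tau> = a * (4 * pi) powr (-1/2) / 2 * (\<tau> powr (-3/2) * exp (- a\<^sup>2 / (4 * \<tau>)))"
proof -
  have split: "(4 * pi * \<tau>) powr (-1/2) = (4 * pi) powr (-1/2) * \<tau> powr (-1/2)"
    using assms by (simp add: powr_mult)
  have pow: "\<tau> powr (-3/2) = \<tau> powr (-1/2) / \<tau>"
    using assms powr_diff [of \<tau> "-1/2" 1] by simp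
  show ?thesis
    unfolding heat_flux_def heat_kernel1_def split pow by (simp add: field_simps)
qed

lemma heat_flux_scale:
  assumes a: "a > 0" and v: "v > 0"
  shows "heat_flux a (a\<^sup>2 * v) = heat_flux 1 v / a\<^sup>2"
proof -
  have a2: "a\<^sup>2 = a powr 2"
    using a by (simp add: powr_realpow)
  have "(a\<^sup>2) powr (-3/2) = a powr (-3)"
    unfolding a2 by (simp add: powr_powr)
  then have pow: "(a\<^sup>2 * v) powr (-3/2) = a powr (-3) * v powr (-3/2)"
    using a v by (simp add: powr_mult)
  have "a * a powr (-3) = a powr (-2)"
    using a by (simp add: powr_mult_base)
  also have "\<dots> = 1 / a\<^sup>2"
    using a by (simp add: powr_minus_divide)
  finally have a3: "a * a powr (-3) = 1 / a\<^sup>2" .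
  have arg: "- a\<^sup>2 / (4 * (a\<^sup>2 * v)) = - 1\<^sup>2 / (4 * v)"
    using a by simp
  have "heat_flux a (a\<^sup>2 * v)
      = a * a powr (-3) * ((4 * pi) powr (-1/2) / 2 * (v powr (-3/2) * exp (- 1\<^sup>2 / (4 * v))))"
    using a v unfolding heat_flux_eq[of "a\<^sup>2 * v", OF mult_pos_pos[OF zero_less_power[OF a] v]] pow arg
    by (simp add: field_simps)
  also have "\<dots> = heat_flux 1 v / a\<^sup>2"
    unfolding a3 heat_flux_eq[OF v] by simp
  finally show ?thesis .
qed

definition flux_moment :: "real \<Rightarrow> real \<Rightarrow> ennreal" where
  "flux_moment e a = (\<integral>\<^sup>+\<tau>\<in>{0<..}. ennreal (\<tau> powr (-e) * heat_flux a \<tau>) \<partial>lborel)"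

lemma flux_moment_scale:
  assumes a: "a > 0"
  shows "flux_moment e a = ennreal (a powr (-2 * e)) * flux_moment e 1"
proof -
  let ?f = "\<lambda>a \<tau>. ennreal (\<tau> powr (-e) * heat_flux a \<tau>) * indicator {0<..} \<tau>"
  have substitution: "flux_moment e a = ennreal \<bar>a\<^sup>2\<bar> * (\<integral>\<^sup>+v. ?f a (0 + a\<^sup>2 * v) \<partial>lborel)"
    unfolding flux_moment_def using a
    by (intro nn_integral_real_affine) (auto simp: heat_flux_def heat_kernel1_def)
  have a2: "a\<^sup>2 = a powr 2"
    using a by (simp add: powr_realpow)
  have pointwise: "?f a (0 + a\<^sup>2 * v) = ennreal (a powr (-2 * e) / a\<^sup>2) * ?f 1 v" for v
  proof (cases "v > 0")
    case True
    have "(a\<^sup>2 * v) powr (-e) = (a\<^sup>2) powr (-e) * v powr (-e)"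
      by (rule powr_mult)
    also have "(a\<^sup>2) powr (-e) = a powr (-2 * e)"
      unfolding a2 powr_powr by simp
    finally have "(a\<^sup>2 * v) powr (-e) * heat_flux a (a\<^sup>2 * v)
        = a powr (-2 * e) / a\<^sup>2 * (v powr (-e) * heat_flux 1 v)"
      unfolding heat_flux_scale[OF a True] by simp
    moreover have "ennreal (a powr (-2 * e) / a\<^sup>2 * (v powr (-e) * heat_flux 1 v))
        = ennreal (a powr (-2 * e) / a\<^sup>2) * ennreal (v powr (-e) * heat_flux 1 v)"
      by (rule ennreal_mult') simp
    ultimately show ?thesis
      using a True by simp
  qed (use a in \<open>simp add: zero_less_mult_iff\<close>)
  have "(\<integral>\<^sup>+v. ?f a (0 + a\<^sup>2 * v) \<partial>lborel) = ennreal (a powr (-2 * e) / a\<^sup>2) * flux_moment e 1"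
    unfolding pointwise flux_moment_def
    by (rule nn_integral_cmult) (simp add: heat_flux_def heat_kernel1_def)
  then have "flux_moment e a = ennreal (a\<^sup>2) * (ennreal (a powr (-2 * e) / a\<^sup>2) * flux_moment e 1)"
    unfolding substitution by simp
  also have "\<dots> = ennreal (a\<^sup>2) * ennreal (a powr (-2 * e) / a\<^sup>2) * flux_moment e 1"
    by (simp add: mult.assoc)
  also have "ennreal (a\<^sup>2) * ennreal (a powr (-2 * e) / a\<^sup>2) = ennreal (a powr (-2 * e))"
    using a by (simp flip: ennreal_mult)
  finally show ?thesis .
qed

lemma flux_moment_one_integrand_le:
  fixes e B \<tau> :: real
  defines "c \<equiv> (4 * pi) powr (-1/2) / 2"
  assumes e: "e \<ge> 0"
    and B: "\<And>v. 0 < v \<Longrightarrow> v \<le> 1 \<Longrightarrow> v powr (-(e + 3/2)) * exp (- 1 / (4 * v)) \<le> B"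
  shows "ennreal (\<tau> powr (-e) * heat_flux 1 \<tau>) * indicator {0<..} \<tau>
      \<le> ennreal (c * B) * indicator {0..1} \<tau> + ennreal c * (ennreal (\<tau> powr (-3/2)) * indicator {1..} \<tau>)"
proof (cases "\<tau> > 0")
  case True
  have "\<tau> powr (-(e + 3/2)) = \<tau> powr (-e) * \<tau> powr (-3/2)"
    by (simp flip: powr_add)
  then have eq: "\<tau> powr (-e) * heat_flux 1 \<tau> = c * (\<tau> powr (-(e + 3/2)) * exp (- 1 / (4 * \<tau>)))"
    unfolding heat_flux_eq[OF True] c_def by (simp add: mult_ac)
  show ?thesis
  proof (cases "\<tau> \<le> 1")
    case small: True
    have "c * (\<tau> powr (-(e + 3/2)) * exp (- 1 / (4 * \<tau>))) \<le> c * B"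
      using B[OF True small] by (intro mult_left_mono) (auto simp: c_def)
    then have "ennreal (\<tau> powr (-e) * heat_flux 1 \<tau>) \<le> ennreal (c * B)"
      unfolding eq by (rule ennreal_leI)
    then show ?thesis
      using True small by (intro add_increasing2) auto
  next
    case large: False
    have "\<tau> powr (-(e + 3/2)) * exp (- 1 / (4 * \<tau>)) \<le> \<tau> powr (-3/2) * 1"
      using True large e by (intro mult_mono powr_mono) auto
    then have "c * (\<tau> powr (-(e + 3/2)) * exp (- 1 / (4 * \<tau>))) \<le> c * \<tau> powr (-3/2)"
      by (intro mult_left_mono) (auto simp: c_def)
    then have "ennreal (\<tau> powr (-e) * heat_flux 1 \<tau>) \<le> ennreal (c * \<tau> powr (-3/2))"
      unfolding eq by (rule ennreal_leI)
    also have "\<dots> = ennreal c * ennreal (\<tau> powr (-3/2))"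
      by (rule ennreal_mult') (simp add: c_def)
    finally show ?thesis
      using True large by (intro add_increasing) auto
  qed
qed simp

lemma flux_moment_one_finite:
  assumes e: "e \<ge> 0"
  shows "flux_moment e 1 < \<infinity>"
proof -
  define c where "c = (4 * pi) powr (-1/2) / 2"
  obtain B where B: "\<And>v. 0 < v \<Longrightarrow> v \<le> 1 \<Longrightarrow> v powr (-(e + 3/2)) * exp (- 1 / (4 * v)) \<le> B"
    using powr_mult_exp_neg_inverse_bounded[of "e + 3/2"] e by auto
  have "flux_moment e 1 \<le> (\<integral>\<^sup>+\<tau>. ennreal (c * B) * indicator {0..1} \<tau>
      + ennreal c * (ennreal (\<tau> powr (-3/2)) * indicator {1..} \<tau>) \<partial>lborel)"
    unfolding flux_moment_def c_def by (intro nn_integral_mono flux_moment_one_integrand_le e B)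
  also have "\<dots> = (\<integral>\<^sup>+\<tau>. ennreal (c * B) * indicator {0..1} (\<tau>::real) \<partial>lborel)
      + (\<integral>\<^sup>+\<tau>. ennreal c * (ennreal (\<tau> powr (-3/2)) * indicator {1..} \<tau>) \<partial>lborel)"
    by (rule nn_integral_add) auto
  also have "(\<integral>\<^sup>+\<tau>. ennreal (c * B) * indicator {0..1} (\<tau>::real) \<partial>lborel) = ennreal (c * B)"
    by (subst nn_integral_cmult_indicator) auto
  also have "(\<integral>\<^sup>+\<tau>. ennreal c * (ennreal (\<tau> powr (-3/2)) * indicator {1..} \<tau>) \<partial>lborel)
      = ennreal c * ennreal (1 powr (1 - 3/2) / (3/2 - 1))"
    by (subst nn_integral_cmult) (auto simp: nn_integral_powr_atLeast)
  also have "ennreal (c * B) + ennreal c * ennreal (1 powr (1 - 3/2) / (3/2 - 1)) < \<infinity>"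
    by (simp add: ennreal_mult_less_top)
  finally show ?thesis .
qed

lemma flux_moment_eq:
  assumes "e \<ge> 0"
  obtains C where "C \<ge> 0" "\<And>a. a > 0 \<Longrightarrow> flux_moment e a = ennreal (C * a powr (-2 * e))"
proof -
  obtain C where C: "C \<ge> 0" "flux_moment e 1 = ennreal C"
    using flux_moment_one_finite[OF assms] by (cases "flux_moment e 1") auto
  have "flux_moment e a = ennreal (C * a powr (-2 * e))" if "a > 0" for a
  proof -
    have "flux_moment e a = ennreal (a powr (-2 * e)) * ennreal C"
      using flux_moment_scale[OF that] C(2) by simp
    then show ?thesis
      using C(1) by (simp add: ennreal_mult' mult.commute)
  qed
  with C(1) show ?thesis
    using that by blast
qed

section \<open>A majorant of \<Phi>\<close>

definition Phi_majorant :: "real \<Rightarrow> real \<Rightarrow> real^'n \<Rightarrow> ennreal" where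
  "Phi_majorant \<sigma> a z = 2 * (\<integral>\<^sup>+\<tau>\<in>{0<..}. ennreal (heat_kernel z (\<sigma> + \<tau>) * heat_flux a \<tau>) \<partial>lborel)"

lemma measurable_Phi_majorant_integrand:
  fixes x' :: "real^'n"
  shows "(\<lambda>(y', \<tau>). ennreal (heat_kernel (x' - y') (\<sigma> + \<tau>) * heat_flux a \<tau>) * indicator {0<..} \<tau>)
     \<in> borel_measurable (lborel \<Otimes>\<^sub>M lborel)"
  unfolding heat_kernel_def heat_flux_def heat_kernel1_def by measurable

lemma borel_measurable_Phi_majorant:
  fixes x' :: "real^'n"
  shows "(\<lambda>y'. Phi_majorant \<sigma> a (x' - y')) \<in> borel_measurable lborel"
proof -
  have "(\<lambda>y'. \<integral>\<^sup>+\<tau>\<in>{0<..}. ennreal (heat_kernel (x' - y') (\<sigma> + \<tau>) * heat_flux a \<tau>) \<partial>lborel)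
      \<in> borel_measurable lborel"
    using measurable_Phi_majorant_integrand by (rule lborel.borel_measurable_nn_integral)
  then show ?thesis
    unfolding Phi_majorant_def by measurable
qed

lemma abs_Phi_le_majorant:
  fixes x' y' :: "real^'n"
  assumes "0 \<le> xN + t / \<delta>"
  shows "ennreal \<bar>Phi \<delta> k x' xN y' 0 t\<bar> \<le> Phi_majorant (k / \<delta> * t) (xN + t / \<delta>) (x' - y')"
proof -
  let ?f = "\<lambda>\<tau>. indicator {0<..} \<tau> *\<^sub>R
    (heat_kernel (x' - y') (k / \<delta> * t + \<tau>) * dheat_kernel1 (xN + t / \<delta>) \<tau>)"
  have "ennreal \<bar>Phi \<delta> k x' xN y' 0 t\<bar> = 2 * ennreal \<bar>\<integral>\<tau>. ?f \<tau> \<partial>lborel\<bar>"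
    by (simp add: Phi_def set_lebesgue_integral_def abs_mult ennreal_mult)
  also have "\<dots> \<le> 2 * (\<integral>\<^sup>+\<tau>. ennreal \<bar>?f \<tau>\<bar> \<partial>lborel)"
    by (intro mult_left_mono abs_integral_le_nn_integral) simp
  also have "(\<integral>\<^sup>+\<tau>. ennreal \<bar>?f \<tau>\<bar> \<partial>lborel) = (\<integral>\<^sup>+\<tau>\<in>{0<..}.
      ennreal (heat_kernel (x' - y') (k / \<delta> * t + \<tau>) * heat_flux (xN + t / \<delta>) \<tau>) \<partial>lborel)"
    using assms
    by (intro nn_integral_cong) (auto simp: indicator_def abs_mult abs_dheat_kernel1 heat_kernel_nonneg)
  finally show ?thesis
    unfolding Phi_majorant_def .
qed

lemma nn_integral_Phi_majorant:
  fixes x' :: "real^'n"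
  assumes \<sigma>: "\<sigma> \<ge> 0" and a: "a > 0"
  shows "(\<integral>\<^sup>+y'. Phi_majorant \<sigma> a (x' - y') \<partial>lborel) = 2 * flux_moment 0 1"
proof -
  let ?g = "\<lambda>y' \<tau>. ennreal (heat_kernel (x' - y') (\<sigma> + \<tau>) * heat_flux a \<tau>) * indicator {0<..} \<tau>"
  have "(\<integral>\<^sup>+y'. Phi_majorant \<sigma> a (x' - y') \<partial>lborel) = 2 * (\<integral>\<^sup>+y'. (\<integral>\<^sup>+\<tau>. ?g y' \<tau> \<partial>lborel) \<partial>lborel)"
    unfolding Phi_majorant_def
    by (rule nn_integral_cmult)
      (rule lborel.borel_measurable_nn_integral[OF measurable_Phi_majorant_integrand])
  also have "(\<integral>\<^sup>+y'. (\<integral>\<^sup>+\<tau>. ?g y' \<tau> \<partial>lborel) \<partial>lborel) = (\<integral>\<^sup>+\<tau>. (\<integral>\<^sup>+y'. ?g y' \<tau> \<partial>lborel) \<partial>lborel)"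
    by (rule lborel_pair.Fubini'[symmetric]) (rule measurable_Phi_majorant_integrand)
  also have "\<dots> = flux_moment 0 a"
    unfolding flux_moment_def
  proof (rule nn_integral_cong)
    fix \<tau> :: real
    show "(\<integral>\<^sup>+y'. ?g y' \<tau> \<partial>lborel) = ennreal (\<tau> powr (-0) * heat_flux a \<tau>) * indicator {0<..} \<tau>"
    proof (cases "\<tau> > 0")
      case True
      have "(\<integral>\<^sup>+y'. ?g y' \<tau> \<partial>lborel)
          = (\<integral>\<^sup>+y'. ennreal (heat_flux a \<tau>) * ennreal (heat_kernel (x' - y') (\<sigma> + \<tau>)) \<partial>lborel)"
        using True heat_flux_nonneg[of a \<tau>] a
        by (intro nn_integral_cong) (simp add: ennreal_mult' mult.commute)
      also have "\<dots> = ennreal (heat_flux a \<tau>) * (\<integral>\<^sup>+y'. ennreal (heat_kernel (x' - y') (\<sigma> + \<tau>)) \<partial>lborel)"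
        unfolding heat_kernel_def by (rule nn_integral_cmult) measurable
      also have "(\<integral>\<^sup>+y'. ennreal (heat_kernel (x' - y') (\<sigma> + \<tau>)) \<partial>lborel) = 1"
        using \<sigma> True by (intro nn_integral_heat_kernel) simp
      finally show ?thesis
        using True by simp
    qed simp
  qed
  also have "flux_moment 0 a = flux_moment 0 1"
    using flux_moment_scale[OF a, of 0] a by simp
  finally show ?thesis .
qed

lemma Phi_majorant_le:
  assumes heat: "\<And>\<tau>. \<tau> > 0 \<Longrightarrow> heat_kernel z (\<sigma> + \<tau>) \<le> c * \<tau> powr (-e)"
    and c: "c \<ge> 0" and a: "a \<ge> 0"
  shows "Phi_majorant \<sigma> a z \<le> 2 * ennreal c * flux_moment e a"
proof -
  have "(\<integral>\<^sup>+\<tau>\<in>{0<..}. ennreal (heat_kernel z (\<sigma> + \<tau>) * heat_flux a \<tau>) \<partial>lborel)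
      \<le> (\<integral>\<^sup>+\<tau>. ennreal c * (ennreal (\<tau> powr (-e) * heat_flux a \<tau>) * indicator {0<..} \<tau>) \<partial>lborel)"
  proof (rule nn_integral_mono)
    fix \<tau> :: real
    show "ennreal (heat_kernel z (\<sigma> + \<tau>) * heat_flux a \<tau>) * indicator {0<..} \<tau>
        \<le> ennreal c * (ennreal (\<tau> powr (-e) * heat_flux a \<tau>) * indicator {0<..} \<tau>)"
    proof (cases "\<tau> > 0")
      case True
      have "heat_kernel z (\<sigma> + \<tau>) * heat_flux a \<tau> \<le> c * \<tau> powr (-e) * heat_flux a \<tau>"
        by (rule mult_right_mono[OF heat[OF True] heat_flux_nonneg[OF a True]])
      then have "ennreal (heat_kernel z (\<sigma> + \<tau>) * heat_flux a \<tau>) \<le> ennreal (c * (\<tau> powr (-e) * heat_flux a \<tau>))"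
        by (intro ennreal_leI) (simp add: mult.assoc)
      also have "\<dots> = ennreal c * ennreal (\<tau> powr (-e) * heat_flux a \<tau>)"
        by (rule ennreal_mult'[OF c])
      finally show ?thesis
        using True by simp
    qed simp
  qed
  also have "\<dots> = ennreal c * flux_moment e a"
    unfolding flux_moment_def by (rule nn_integral_cmult) (simp add: heat_flux_def heat_kernel1_def)
  finally show ?thesis
    unfolding Phi_majorant_def by (simp add: mult.assoc mult_left_mono)
qed

lemma Phi_majorant_le_height:
  obtains C where "C \<ge> 0"
    "\<And>\<sigma> a (z::real^'n). 0 \<le> \<sigma> \<Longrightarrow> 0 < a \<Longrightarrow> Phi_majorant \<sigma> a z \<le> ennreal (C * a powr (- real CARD('n)))"
proof -
  define d where "d = real CARD('n)"
  obtain F where F: "F \<ge> 0" "\<And>a. a > 0 \<Longrightarrow> flux_moment (d / 2) a = ennreal (F * a powr (-2 * (d / 2)))"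
    using flux_moment_eq[of "d / 2"] by (auto simp: d_def)
  have bound: "Phi_majorant \<sigma> a z \<le> ennreal (2 * (4 * pi) powr (- d / 2) * F * a powr (- d))"
    if "0 \<le> \<sigma>" "0 < a" for \<sigma> a and z :: "real^'n"
  proof -
    have "Phi_majorant \<sigma> a z \<le> 2 * ennreal ((4 * pi) powr (- d / 2)) * flux_moment (d / 2) a"
      using that unfolding d_def by (intro Phi_majorant_le heat_kernel_shift_le) auto
    also have "\<dots> = ennreal (2 * (4 * pi) powr (- d / 2) * F * a powr (- d))"
      using F that by (simp add: ennreal_mult mult.assoc)
    finally show ?thesis .
  qed
  show ?thesis
    by (rule that[of "2 * (4 * pi) powr (- d / 2) * F"]) (use F(1) bound in \<open>auto simp: d_def\<close>)
qed

lemma Phi_majorant_le_time: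
  obtains C where "C \<ge> 0"
    "\<And>\<sigma> a (z::real^'n). 0 < \<sigma> \<Longrightarrow> 0 < a \<Longrightarrow> Phi_majorant \<sigma> a z \<le> ennreal (C * \<sigma> powr (- real CARD('n) / 2))"
proof -
  define d where "d = real CARD('n)"
  obtain F where F: "F \<ge> 0" "\<And>a. a > 0 \<Longrightarrow> flux_moment 0 a = ennreal (F * a powr (-2 * 0))"
    using flux_moment_eq[of 0] by auto
  have bound: "Phi_majorant \<sigma> a z \<le> ennreal (2 * (4 * pi) powr (- d / 2) * F * \<sigma> powr (- d / 2))"
    if "0 < \<sigma>" "0 < a" for \<sigma> a and z :: "real^'n"
  proof -
    have "Phi_majorant \<sigma> a z \<le> 2 * ennreal ((4 * pi) powr (- d / 2) * \<sigma> powr (- d / 2)) * flux_moment 0 a"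
    proof (rule Phi_majorant_le)
      fix \<tau> :: real
      assume "\<tau> > 0"
      have "heat_kernel z (\<sigma> + \<tau>) \<le> (4 * pi * (\<sigma> + \<tau>)) powr (- d / 2)"
        unfolding d_def using that \<open>\<tau> > 0\<close> by (intro heat_kernel_le) simp
      also have "\<dots> \<le> (4 * pi * \<sigma>) powr (- d / 2)"
        using that \<open>\<tau> > 0\<close> by (intro powr_mono2') (auto simp: d_def)
      finally show "heat_kernel z (\<sigma> + \<tau>) \<le> (4 * pi) powr (- d / 2) * \<sigma> powr (- d / 2) * \<tau> powr (- 0)"
        using \<open>\<tau> > 0\<close> by (simp add: powr_mult)
    qed (use that in simp_all)
    also have "\<dots> = ennreal (2 * (4 * pi) powr (- d / 2) * F * \<sigma> powr (- d / 2))"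
      using F that by (simp add: ennreal_mult mult_ac)
    finally show ?thesis .
  qed
  show ?thesis
    by (rule that[of "2 * (4 * pi) powr (- d / 2) * F"]) (use F(1) bound in \<open>auto simp: d_def\<close>)
qed

section \<open>The Poisson kernel\<close>

lemma cN_pos: "cN TYPE('n::finite) > 0"
  unfolding cN_def by (simp add: Gamma_real_pos)

lemma poisson_nonneg: "s \<ge> 0 \<Longrightarrow> poisson (z::real^'n) s \<ge> 0"
  unfolding poisson_def using cN_pos[where 'n='n] by simp

lemma poisson_le:
  fixes z :: "real^'n"
  assumes s: "s > 0"
  shows "poisson z s \<le> cN TYPE('n) * s powr (- real CARD('n))"
proof -
  define R where "R = sqrt ((norm z)\<^sup>2 + s\<^sup>2)"
  have R: "s \<le> R"
    unfolding R_def using s by (simp add: real_le_rsqrt)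
  have "poisson z s = cN TYPE('n) * s / R ^ (CARD('n) + 1)"
    unfolding poisson_def R_def ..
  also have "\<dots> \<le> cN TYPE('n) * s / s ^ (CARD('n) + 1)"
    using cN_pos[where 'n='n] s R by (intro divide_left_mono power_mono mult_pos_pos) auto
  also have "\<dots> = cN TYPE('n) * s powr (- real CARD('n))"
    using s by (simp add: powr_minus_divide powr_realpow divide_simps)
  finally show ?thesis .
qed

text \<open>Since |z_b| + s \<le> 2 (|z|^2 + s^2)^{1/2} for every coordinate b, the Poisson kernel is
  dominated by a product of integrable one-dimensional factors, which bounds its L^1 norm
  without polar coordinates.\<close>

lemma poisson_le_prod:
  fixes z :: "real^'n"
  assumes s: "s > 0"
  shows "poisson z s \<le> cN TYPE('n) * 2 ^ (CARD('n) + 1) * s *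
           (\<Prod>b\<in>Basis. (\<bar>z \<bullet> b\<bar> + s) powr (- ((real CARD('n) + 1) / real CARD('n))))"
proof -
  define d where "d = real CARD('n)"
  define r where "r = (d + 1) / d"
  define R where "R = sqrt ((norm z)\<^sup>2 + s\<^sup>2)"
  have d: "d > 0"
    unfolding d_def by simp
  have R: "s \<le> R" "norm z \<le> R"
    unfolding R_def using s by (simp_all add: real_le_rsqrt)
  have "(\<Prod>b\<in>(Basis::(real^'n) set). (\<bar>z \<bullet> b\<bar> + s) powr r) \<le> (\<Prod>b\<in>(Basis::(real^'n) set). (2 * R) powr r)"
  proof (rule prod_mono)
    fix b :: "real^'n"
    assume "b \<in> Basis"
    then have "\<bar>z \<bullet> b\<bar> + s \<le> 2 * R"
      using Basis_le_norm[of b z] R by linarith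
    then show "0 \<le> (\<bar>z \<bullet> b\<bar> + s) powr r \<and> (\<bar>z \<bullet> b\<bar> + s) powr r \<le> (2 * R) powr r"
      using s d by (auto simp: r_def intro!: powr_mono2)
  qed
  also have "\<dots> = (2 * R) powr (r * d)"
    unfolding d_def using R s by (simp add: powr_realpow[symmetric] powr_powr)
  also have "r * d = d + 1"
    unfolding r_def using d by simp
  also have "(2 * R) powr (d + 1) = (2 * R) ^ (CARD('n) + 1)"
    unfolding d_def using R s
    by (metis of_nat_Suc Suc_eq_plus1 add.commute powr_realpow mult_pos_pos zero_less_numeral order.strict_trans2)
  finally have P: "(\<Prod>b\<in>(Basis::(real^'n) set). (\<bar>z \<bullet> b\<bar> + s) powr r) \<le> (2 * R) ^ (CARD('n) + 1)" .
  have P_pos: "(\<Prod>b\<in>(Basis::(real^'n) set). (\<bar>z \<bullet> b\<bar> + s) powr r) > 0"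
    using s by (intro prod_pos) auto
  have "poisson z s = cN TYPE('n) * 2 ^ (CARD('n) + 1) * s / (2 * R) ^ (CARD('n) + 1)"
    unfolding poisson_def R_def by (simp add: power_mult_distrib)
  also have "\<dots> \<le> cN TYPE('n) * 2 ^ (CARD('n) + 1) * s / (\<Prod>b\<in>(Basis::(real^'n) set). (\<bar>z \<bullet> b\<bar> + s) powr r)"
    using cN_pos[where 'n='n] s R P_pos P by (intro divide_left_mono) auto
  also have "\<dots> = cN TYPE('n) * 2 ^ (CARD('n) + 1) * s * (\<Prod>b\<in>Basis. (\<bar>z \<bullet> b\<bar> + s) powr (- r))"
    using s by (simp add: powr_minus prod_inversef[symmetric] divide_inverse)
  finally show ?thesis
    unfolding r_def d_def .
qed

lemma nn_integral_poisson_le: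
  fixes x' :: "real^'n"
  assumes s: "s > 0"
  shows "(\<integral>\<^sup>+y'. ennreal (poisson (x' - y') s) \<partial>lborel)
     \<le> ennreal (cN TYPE('n) * 2 ^ (CARD('n) + 1) * (2 * real CARD('n)) ^ CARD('n))"
proof -
  define d where "d = real CARD('n)"
  define r where "r = (d + 1) / d"
  define K where "K = cN TYPE('n) * 2 ^ (CARD('n) + 1) * s"
  have d: "d > 0" and r: "r > 1"
    unfolding r_def d_def by simp_all
  have K: "K \<ge> 0"
    unfolding K_def using cN_pos[where 'n='n] s by simp
  have "(\<integral>\<^sup>+y'. ennreal (poisson (x' - y') s) \<partial>lborel)
      \<le> (\<integral>\<^sup>+y'. ennreal K * (\<Prod>b\<in>Basis. ennreal ((\<bar>x' \<bullet> b - y' \<bullet> b\<bar> + s) powr (-r))) \<partial>lborel)"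
  proof (rule nn_integral_mono)
    fix y' :: "real^'n"
    have "ennreal (poisson (x' - y') s) \<le> ennreal (K * (\<Prod>b\<in>Basis. (\<bar>x' \<bullet> b - y' \<bullet> b\<bar> + s) powr (-r)))"
      using poisson_le_prod[OF s, of "x' - y'"] unfolding K_def r_def d_def
      by (intro ennreal_leI) (simp add: inner_diff_left)
    then show "ennreal (poisson (x' - y') s) \<le> ennreal K * (\<Prod>b\<in>Basis. ennreal ((\<bar>x' \<bullet> b - y' \<bullet> b\<bar> + s) powr (-r)))"
      using K by (simp add: ennreal_mult' prod_ennreal)
  qed
  also have "\<dots> = ennreal K * (\<integral>\<^sup>+y'. (\<Prod>b\<in>Basis. ennreal ((\<bar>x' \<bullet> b - y' \<bullet> b\<bar> + s) powr (-r))) \<partial>lborel)"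
    by (rule nn_integral_cmult) measurable
  also have "(\<integral>\<^sup>+y'. (\<Prod>b\<in>Basis. ennreal ((\<bar>x' \<bullet> b - y' \<bullet> b\<bar> + s) powr (-r))) \<partial>lborel)
      = (\<Prod>b\<in>(Basis::(real^'n) set). (\<integral>\<^sup>+u. ennreal ((\<bar>x' \<bullet> b - u\<bar> + s) powr (-r)) \<partial>lborel))"
    by (rule nn_integral_lborel_prod) auto
  also have "ennreal K * (\<Prod>b\<in>(Basis::(real^'n) set). (\<integral>\<^sup>+u. ennreal ((\<bar>x' \<bullet> b - u\<bar> + s) powr (-r)) \<partial>lborel))
      \<le> ennreal K * (\<Prod>b\<in>(Basis::(real^'n) set). ennreal (2 * (s powr (1 - r) / (r - 1))))"
    by (intro mult_left_mono prod_mono_ennreal nn_integral_powr_abs_le s r) simp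
  also have "\<dots> = ennreal (K * (2 * (s powr (1 - r) / (r - 1))) ^ CARD('n))"
    using K s r by (simp add: ennreal_power ennreal_mult')
  also have "K * (2 * (s powr (1 - r) / (r - 1))) ^ CARD('n)
      = cN TYPE('n) * 2 ^ (CARD('n) + 1) * (2 * real CARD('n)) ^ CARD('n)"
  proof -
    have "(s powr (1 - r)) ^ CARD('n) = s powr ((1 - r) * d)"
      unfolding d_def using s by (simp add: powr_realpow[symmetric] powr_powr)
    also have "(1 - r) * d = -1"
      unfolding r_def using d by (simp add: field_simps)
    finally have "(s powr (1 - r)) ^ CARD('n) = 1 / s"
      using s by (simp add: powr_minus_divide)
    moreover have "r - 1 = 1 / d"
      unfolding r_def using d by (simp add: field_simps)
    ultimately show ?thesis
      unfolding K_def d_def using s by (simp add: power_mult_distrib)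
  qed
  finally show ?thesis .
qed

section \<open>Decay estimates\<close>

lemma abs_v_fun_le:
  fixes \<psi> :: "real^'n \<Rightarrow> real"
  assumes p: "1 \<le> p"
    and \<psi>: "\<psi> \<in> borel_measurable lborel" "integrable lborel (\<lambda>y. \<bar>\<psi> y\<bar> powr p)"
  obtains m where "\<And>\<delta> k x' xN t S. 0 \<le> k / \<delta> * t \<Longrightarrow> 0 < xN + t / \<delta> \<Longrightarrow> 0 \<le> S \<Longrightarrow>
      (\<And>z::real^'n. Phi_majorant (k / \<delta> * t) (xN + t / \<delta>) z \<le> ennreal S) \<Longrightarrow>
      \<bar>v_fun \<delta> k \<psi> x' xN t\<bar> \<le> m * S powr (1 / p)"
proof -
  obtain F where F: "F \<ge> 0" "flux_moment 0 1 = ennreal F"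
    using flux_moment_one_finite[of 0] by (cases "flux_moment 0 1") auto
  show thesis
  proof (rule that)
    fix \<delta> k xN t S and x' :: "real^'n"
    assume \<sigma>: "0 \<le> k / \<delta> * t" and a: "0 < xN + t / \<delta>" and S: "0 \<le> S"
      and sup: "\<And>z::real^'n. Phi_majorant (k / \<delta> * t) (xN + t / \<delta>) z \<le> ennreal S"
    show "\<bar>v_fun \<delta> k \<psi> x' xN t\<bar> \<le> (2 * F + (\<integral>y. \<bar>\<psi> y\<bar> powr p \<partial>lborel)) * S powr (1 / p)"
      unfolding v_fun_def
    proof (rule abs_integral_le_kernel_Lp[OF p \<psi> borel_measurable_Phi_majorant])
      show "ennreal \<bar>Phi \<delta> k x' xN y' 0 t * \<psi> y'\<bar>
          \<le> Phi_majorant (k / \<delta> * t) (xN + t / \<delta>) (x' - y') * ennreal \<bar>\<psi> y'\<bar>" for y'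
        using abs_Phi_le_majorant[of xN t \<delta> k x' y'] a
        by (simp add: abs_mult ennreal_mult mult_right_mono)
      show "(\<integral>\<^sup>+y'. Phi_majorant (k / \<delta> * t) (xN + t / \<delta>) (x' - y') \<partial>lborel) \<le> ennreal (2 * F)"
        using nn_integral_Phi_majorant[OF \<sigma> a, of x'] F by (simp add: ennreal_mult)
      show "Phi_majorant (k / \<delta> * t) (xN + t / \<delta>) (x' - y') \<le> ennreal S" for y'
        by (rule sup)
    qed (use F(1) S in simp_all)
  qed
qed

lemma abs_w_fun_le:
  fixes \<psi> :: "real^'n \<Rightarrow> real"
  assumes p: "1 \<le> p"
    and \<psi>: "\<psi> \<in> borel_measurable lborel" "integrable lborel (\<lambda>y. \<bar>\<psi> y\<bar> powr p)"
  obtains m where "\<And>\<delta> x' xN t S. 0 < xN + t / \<delta> \<Longrightarrow>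
      cN TYPE('n) * (xN + t / \<delta>) powr (- real CARD('n)) \<le> S \<Longrightarrow>
      \<bar>w_fun \<delta> \<psi> x' xN t\<bar> \<le> m * S powr (1 / p)"
proof -
  define M where "M = cN TYPE('n) * 2 ^ (CARD('n) + 1) * (2 * real CARD('n)) ^ CARD('n)"
  have M: "M \<ge> 0"
    unfolding M_def using cN_pos[where 'n='n] by simp
  show thesis
  proof (rule that)
    fix \<delta> xN t S and x' :: "real^'n"
    assume s: "0 < xN + t / \<delta>" and S: "cN TYPE('n) * (xN + t / \<delta>) powr (- real CARD('n)) \<le> S"
    have S_nonneg: "0 \<le> S"
      using S cN_pos[where 'n='n] by (smt (verit) mult_nonneg_nonneg powr_ge_zero)
    show "\<bar>w_fun \<delta> \<psi> x' xN t\<bar> \<le> (M + (\<integral>y. \<bar>\<psi> y\<bar> powr p \<partial>lborel)) * S powr (1 / p)"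
      unfolding w_fun_def
    proof (rule abs_integral_le_kernel_Lp[OF p \<psi>])
      show "(\<lambda>y'. ennreal (poisson (x' - y') (xN + t / \<delta>))) \<in> borel_measurable lborel"
        unfolding poisson_def by measurable
      show "ennreal \<bar>poisson (x' - y') (xN + t / \<delta>) * \<psi> y'\<bar>
          \<le> ennreal (poisson (x' - y') (xN + t / \<delta>)) * ennreal \<bar>\<psi> y'\<bar>" for y'
        using poisson_nonneg[of "xN + t / \<delta>" "x' - y'"] s by (simp add: abs_mult ennreal_mult)
      show "(\<integral>\<^sup>+y'. ennreal (poisson (x' - y') (xN + t / \<delta>)) \<partial>lborel) \<le> ennreal M"
        unfolding M_def by (rule nn_integral_poisson_le[OF s])
      show "ennreal (poisson (x' - y') (xN + t / \<delta>)) \<le> ennreal S" for y'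
        using poisson_le[OF s, of "x' - y'"] S by (intro ennreal_leI) simp
    qed (use M S_nonneg in simp_all)
  qed
qed

lemma v_fun_le_delta:
  fixes \<psi> :: "real^'n \<Rightarrow> real"
  assumes p: "1 \<le> p"
    and \<psi>: "\<psi> \<in> borel_measurable lborel" "integrable lborel (\<lambda>y. \<bar>\<psi> y\<bar> powr p)"
    and T: "T > 0"
  shows "\<exists>C. \<forall>k\<ge>0. \<forall>\<delta>>0. \<forall>x' xN t. xN > 0 \<longrightarrow> t > T \<longrightarrow>
    \<bar>v_fun \<delta> k \<psi> x' xN t\<bar> \<le> C * \<delta> powr (real CARD('n) / p)"
proof -
  define d where "d = real CARD('n)"
  obtain m where m: "\<And>\<delta> k x' xN t S. 0 \<le> k / \<delta> * t \<Longrightarrow> 0 < xN + t / \<delta> \<Longrightarrow> 0 \<le> S \<Longrightarrow>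
      (\<And>z::real^'n. Phi_majorant (k / \<delta> * t) (xN + t / \<delta>) z \<le> ennreal S) \<Longrightarrow>
      \<bar>v_fun \<delta> k \<psi> x' xN t\<bar> \<le> m * S powr (1 / p)"
    using abs_v_fun_le[OF p \<psi>] by blast
  obtain C where C: "C \<ge> 0"
    "\<And>\<sigma> a (z::real^'n). 0 \<le> \<sigma> \<Longrightarrow> 0 < a \<Longrightarrow> Phi_majorant \<sigma> a z \<le> ennreal (C * a powr (- d))"
    using Phi_majorant_le_height[where 'n='n] unfolding d_def by blast
  have "\<bar>v_fun \<delta> k \<psi> x' xN t\<bar> \<le> m * (C * T powr (- d)) powr (1 / p) * \<delta> powr (d / p)"
    if k: "k \<ge> 0" and \<delta>: "\<delta> > 0" and xN: "xN > 0" and t: "t > T" for k \<delta> x' xN t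
  proof -
    have aT: "T / \<delta> \<le> xN + t / \<delta>"
      using xN divide_strict_right_mono[OF t \<delta>] by linarith
    have a: "0 < xN + t / \<delta>"
      using aT T \<delta> by (smt (verit) divide_pos_pos)
    have "C * (xN + t / \<delta>) powr (- d) \<le> C * T powr (- d) * \<delta> powr d"
      using mult_left_mono[OF powr_neg_le_of_divide_le[OF T \<delta> aT, of d] C(1)]
      by (simp add: d_def mult.assoc)
    then have "Phi_majorant (k / \<delta> * t) (xN + t / \<delta>) z \<le> ennreal (C * T powr (- d) * \<delta> powr d)"
      for z :: "real^'n"
      using C(2)[of "k / \<delta> * t" "xN + t / \<delta>" z] k \<delta> t T a by (auto intro: order_trans ennreal_leI)
    then have "\<bar>v_fun \<delta> k \<psi> x' xN t\<bar> \<le> m * (C * T powr (- d) * \<delta> powr d) powr (1 / p)"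
      using k \<delta> t T a C(1) by (intro m) auto
    also have "(C * T powr (- d) * \<delta> powr d) powr (1 / p) = (C * T powr (- d)) powr (1 / p) * \<delta> powr (d / p)"
      by (simp add: powr_mult powr_powr)
    finally show ?thesis
      by (simp add: mult.assoc)
  qed
  then show ?thesis
    unfolding d_def by blast
qed

lemma v_fun_le_k:
  fixes \<psi> :: "real^'n \<Rightarrow> real"
  assumes p: "1 \<le> p"
    and \<psi>: "\<psi> \<in> borel_measurable lborel" "integrable lborel (\<lambda>y. \<bar>\<psi> y\<bar> powr p)"
    and T: "T > 0" and \<delta>: "\<delta> > 0"
  shows "\<exists>C. \<forall>k>0. \<forall>x' xN t. xN > 0 \<longrightarrow> t > T \<longrightarrow>
    \<bar>v_fun \<delta> k \<psi> x' xN t\<bar> \<le> C * k powr (- real CARD('n) / (2 * p))"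
proof -
  define d where "d = real CARD('n)"
  obtain m where m: "\<And>\<delta> k x' xN t S. 0 \<le> k / \<delta> * t \<Longrightarrow> 0 < xN + t / \<delta> \<Longrightarrow> 0 \<le> S \<Longrightarrow>
      (\<And>z::real^'n. Phi_majorant (k / \<delta> * t) (xN + t / \<delta>) z \<le> ennreal S) \<Longrightarrow>
      \<bar>v_fun \<delta> k \<psi> x' xN t\<bar> \<le> m * S powr (1 / p)"
    using abs_v_fun_le[OF p \<psi>] by blast
  obtain C where C: "C \<ge> 0"
    "\<And>\<sigma> a (z::real^'n). 0 < \<sigma> \<Longrightarrow> 0 < a \<Longrightarrow> Phi_majorant \<sigma> a z \<le> ennreal (C * \<sigma> powr (- d / 2))"
    using Phi_majorant_le_time[where 'n='n] unfolding d_def by blast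
  have "\<bar>v_fun \<delta> k \<psi> x' xN t\<bar> \<le> m * (C * (\<delta> / T) powr (d / 2)) powr (1 / p) * k powr (- d / (2 * p))"
    if k: "k > 0" and xN: "xN > 0" and t: "t > T" for k x' xN t
  proof -
    have "k / (\<delta> / T) = k / \<delta> * T"
      by simp
    also have "\<dots> \<le> k / \<delta> * t"
      using k \<delta> t by (intro mult_left_mono) auto
    finally have \<sigma>T: "k / (\<delta> / T) \<le> k / \<delta> * t" .
    have \<sigma>: "0 < k / \<delta> * t"
      using k \<delta> t T by simp
    have a: "0 < xN + t / \<delta>"
      using xN t T \<delta> by (intro add_pos_pos divide_pos_pos) auto
    have "C * (k / \<delta> * t) powr (- d / 2) \<le> C * (\<delta> / T) powr (d / 2) * k powr (- d / 2)"
      using mult_left_mono[OF powr_neg_le_of_divide_le[OF k _ \<sigma>T, of "d / 2"] C(1)] \<delta> T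
      by (simp add: d_def mult_ac)
    then have "Phi_majorant (k / \<delta> * t) (xN + t / \<delta>) z \<le> ennreal (C * (\<delta> / T) powr (d / 2) * k powr (- d / 2))"
      for z :: "real^'n"
      using C(2)[OF \<sigma> a, of z] by (auto intro: order_trans ennreal_leI)
    then have "\<bar>v_fun \<delta> k \<psi> x' xN t\<bar> \<le> m * (C * (\<delta> / T) powr (d / 2) * k powr (- d / 2)) powr (1 / p)"
      using \<sigma> a C(1) by (intro m) auto
    also have "(C * (\<delta> / T) powr (d / 2) * k powr (- d / 2)) powr (1 / p)
        = (C * (\<delta> / T) powr (d / 2)) powr (1 / p) * k powr (- d / (2 * p))"
      by (simp add: powr_mult powr_powr)
    finally show ?thesis
      by (simp add: mult.assoc)
  qed
  then show ?thesis
    unfolding d_def by blast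
qed

lemma w_fun_le_delta:
  fixes \<psi> :: "real^'n \<Rightarrow> real"
  assumes p: "1 \<le> p"
    and \<psi>: "\<psi> \<in> borel_measurable lborel" "integrable lborel (\<lambda>y. \<bar>\<psi> y\<bar> powr p)"
    and T: "T > 0"
  shows "\<exists>C. \<forall>\<delta>>0. \<forall>x' xN t. xN > 0 \<longrightarrow> t > T \<longrightarrow>
    \<bar>w_fun \<delta> \<psi> x' xN t\<bar> \<le> C * \<delta> powr (real CARD('n) / p)"
proof -
  define d where "d = real CARD('n)"
  define c where "c = cN TYPE('n) * T powr (- d)"
  obtain m where m: "\<And>\<delta> x' xN t S. 0 < xN + t / \<delta> \<Longrightarrow>
      cN TYPE('n) * (xN + t / \<delta>) powr (- d) \<le> S \<Longrightarrow> \<bar>w_fun \<delta> \<psi> x' xN t\<bar> \<le> m * S powr (1 / p)"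
    using abs_w_fun_le[OF p \<psi>] unfolding d_def by blast
  have "\<bar>w_fun \<delta> \<psi> x' xN t\<bar> \<le> m * c powr (1 / p) * \<delta> powr (d / p)"
    if \<delta>: "\<delta> > 0" and xN: "xN > 0" and t: "t > T" for \<delta> x' xN t
  proof -
    have sT: "T / \<delta> \<le> xN + t / \<delta>"
      using xN divide_strict_right_mono[OF t \<delta>] by linarith
    have s: "0 < xN + t / \<delta>"
      using sT T \<delta> by (smt (verit) divide_pos_pos)
    have "cN TYPE('n) * (xN + t / \<delta>) powr (- d) \<le> c * \<delta> powr d"
      using mult_left_mono[OF powr_neg_le_of_divide_le[OF T \<delta> sT, of d] less_imp_le[OF cN_pos]]
      by (simp add: c_def d_def mult.assoc)
    then have "\<bar>w_fun \<delta> \<psi> x' xN t\<bar> \<le> m * (c * \<delta> powr d) powr (1 / p)"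
      by (rule m[OF s])
    also have "(c * \<delta> powr d) powr (1 / p) = c powr (1 / p) * \<delta> powr (d / p)"
      by (simp add: powr_mult powr_powr)
    finally show ?thesis
      by (simp add: mult.assoc)
  qed
  then show ?thesis
    unfolding d_def by blast
qed

theorem theorem4p2:
  fixes \<psi> :: "real^'n \<Rightarrow> real" and p T :: real
  assumes "1 \<le> p"
    and "\<psi> \<in> borel_measurable lborel"
    and "integrable lborel (\<lambda>y. \<bar>\<psi> y\<bar> powr p)"
    and "T > 0"
  shows "(\<forall>k>0. \<exists>C. \<forall>\<^sub>F \<delta> in at_right 0.
            \<forall>x' xN t. xN > 0 \<longrightarrow> t > T \<longrightarrow>
              \<bar>v_fun \<delta> k \<psi> x' xN t\<bar> \<le> C * \<delta> powr (real CARD('n) / p))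
       \<and> (\<exists>C. \<forall>\<^sub>F \<delta> in at_right 0.
            \<forall>x' xN t. xN > 0 \<longrightarrow> t > T \<longrightarrow>
              \<bar>w_fun \<delta> \<psi> x' xN t\<bar> \<le> C * \<delta> powr (real CARD('n) / p))
       \<and> (\<forall>\<delta>>0. \<exists>C. \<forall>\<^sub>F k in at_top.
            \<forall>x' xN t. xN > 0 \<longrightarrow> t > T \<longrightarrow>
              \<bar>v_fun \<delta> k \<psi> x' xN t\<bar> \<le> C * k powr (- real CARD('n) / (2 * p)))"
proof (intro conjI allI impI)
  fix k :: real
  assume "k > 0"
  obtain C where "\<forall>k\<ge>0. \<forall>\<delta>>0. \<forall>x' xN t. xN > 0 \<longrightarrow> t > T \<longrightarrow>
      \<bar>v_fun \<delta> k \<psi> x' xN t\<bar> \<le> C * \<delta> powr (real CARD('n) / p)"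
    using v_fun_le_delta[OF assms] by blast
  with \<open>k > 0\<close> show "\<exists>C. \<forall>\<^sub>F \<delta> in at_right 0. \<forall>x' xN t. xN > 0 \<longrightarrow> t > T \<longrightarrow>
      \<bar>v_fun \<delta> k \<psi> x' xN t\<bar> \<le> C * \<delta> powr (real CARD('n) / p)"
    by (intro exI[of _ C] eventually_mono[OF eventually_at_right_less]) auto
next
  obtain C where "\<forall>\<delta>>0. \<forall>x' xN t. xN > 0 \<longrightarrow> t > T \<longrightarrow>
      \<bar>w_fun \<delta> \<psi> x' xN t\<bar> \<le> C * \<delta> powr (real CARD('n) / p)"
    using w_fun_le_delta[OF assms] by blast
  then show "\<exists>C. \<forall>\<^sub>F \<delta> in at_right 0. \<forall>x' xN t. xN > 0 \<longrightarrow> t > T \<longrightarrow>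
      \<bar>w_fun \<delta> \<psi> x' xN t\<bar> \<le> C * \<delta> powr (real CARD('n) / p)"
    by (intro exI[of _ C] eventually_mono[OF eventually_at_right_less]) auto
next
  fix \<delta> :: real
  assume "\<delta> > 0"
  then obtain C where "\<forall>k>0. \<forall>x' xN t. xN > 0 \<longrightarrow> t > T \<longrightarrow>
      \<bar>v_fun \<delta> k \<psi> x' xN t\<bar> \<le> C * k powr (- real CARD('n) / (2 * p))"
    using v_fun_le_k[OF assms] by blast
  then show "\<exists>C. \<forall>\<^sub>F k in at_top. \<forall>x' xN t. xN > 0 \<longrightarrow> t > T \<longrightarrow>
      \<bar>v_fun \<delta> k \<psi> x' xN t\<bar> \<le> C * k powr (- real CARD('n) / (2 * p))"
    by (intro exI[of _ C] eventually_mono[OF eventually_gt_at_top[of 0]]) auto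
qed

end
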